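(* Let $k$ be a field containing all $m$-th roots of unity, with $p\nmid m$ if $\operatorname{char}(k)=p>0$. Let $\mathcal A$ be a perfect $k$-algebra, $S$ a commutative associative unital $k$-algebra, $\sigma_1\in\operatorname{Aut}(\mathcal A)$, $\sigma_2\in\operatorname{Aut}(S)$ with $\sigma_1^m=\mathrm{id}$, $\sigma_2^m=\mathrm{id}$, and suppose $S_{\bar 1}$ contains an invertible element $u$ of $S$. Let $d\in\mathcal D((\mathcal A\otimes S)_{\bar 0})$, $i,n\in\mathbb Z$ and $a\in\mathcal A_{\bar i}$. Then $$u^{-nm}d(a\otimes u^{-i+nm})+u^{nm}d(a\otimes u^{-i-nm})=2d(a\otimes u^{-i}),$$ $$u^{-nm}d(a\otimes u^{-i+nm})+nu^{m}d(a\otimes u^{-i-m})=(1+n)d(a\otimes u^{-i}),$$ $$u^{-nm}d(a\otimes u^{-i+nm})-nu^{-m}d(a\otimes u^{-i+m})=(1-n)d(a\otimes u^{-i}).$$ In particular, for $a_{\bar i}\in\mathcal A_{\bar i}$ and $a_{\bar j}\in\mathcal A_{\bar j}$, $$u^{\epsilon(\bar i+\bar j)}\big[u^{-m}d(a_{\bar i}a_{\bar j}\otimes u^{-\epsilon(\bar i+\bar j)+m})-d(a_{\bar i}a_{\bar j}\otimes u^{-\epsilon(\bar i+\bar j)})\big] = u^{\epsilon(\bar i)+\epsilon(\bar j)}\big[u^{-m}d(a_{\bar i}a_{\bar j}\otimes u^{-\epsilon(\bar i)-\epsilon(\bar j)+m})-d(a_{\bar i}a_{\bar j}\otimes u^{-\epsilon(\bar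 i)-\epsilon(\bar j)})\big].$$
   Context: Algebras are $k$-vector spaces with bilinear product (not necessarily associative); perfect means $\mathcal A\mathcal A=\mathcal A$; $\mathcal D$ denotes derivations. Fix a primitive $m$-th root of unity $\omega$; $\mathcal A_{\bar i}=\{a\mid\sigma_1(a)=\omega^ia\}$, $S_{\bar i}=\{s\mid\sigma_2(s)=\omega^is\}$, $(\mathcal A\otimes S)_{\bar 0}=\sum_{\bar j}\mathcal A_{-\bar j}\otimes S_{\bar j}$ is the fixed-point subalgebra of $\sigma_1\otimes\sigma_2$. For $\bar i\in\mathbb Z_m$, $\epsilon(\bar i)$ is its unique representative in $\{0,\dots,m-1\}$. $\mathcal A\otimes S$ is an $S$-bimodule via $s'(a\otimes s)=(a\otimes s)s'=a\otimes ss'$, and products of elements of $S$ with elements of $\mathcal A\otimes S$ denote this action. *)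

theory Defs
  imports Complex_Main
begin

definition bilinear_map ::
  "('k::field \<Rightarrow> 'v::ab_group_add \<Rightarrow> 'v) \<Rightarrow> ('k \<Rightarrow> 'w::ab_group_add \<Rightarrow> 'w)
   \<Rightarrow> ('k \<Rightarrow> 'u::ab_group_add \<Rightarrow> 'u) \<Rightarrow> ('v \<Rightarrow> 'w \<Rightarrow> 'u) \<Rightarrow> bool" where
  "bilinear_map sV sW sU f \<longleftrightarrow>
     (\<forall>w. Vector_Spaces.linear sV sU (\<lambda>v. f v w)) \<and> (\<forall>v. Vector_Spaces.linear sW sU (f v))"

definition k_algebra ::
  "('k::field \<Rightarrow> 'a::ab_group_add \<Rightarrow> 'a) \<Rightarrow> ('a \<Rightarrow> 'a \<Rightarrow> 'a) \<Rightarrow> bool" where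
  "k_algebra sA mA \<longleftrightarrow> vector_space sA \<and> bilinear_map sA sA sA mA"

definition perfect_algebra ::
  "('k::field \<Rightarrow> 'a::ab_group_add \<Rightarrow> 'a) \<Rightarrow> ('a \<Rightarrow> 'a \<Rightarrow> 'a) \<Rightarrow> bool" where
  "perfect_algebra sA mA \<longleftrightarrow> module.span sA {mA x y | x y. True} = UNIV"

(* S is a commutative associative unital k-algebra (ring structure from the type class) *)
definition comm_unital_k_algebra ::
  "('k::field \<Rightarrow> 's::comm_ring_1 \<Rightarrow> 's) \<Rightarrow> bool" where
  "comm_unital_k_algebra sS \<longleftrightarrow> vector_space sS \<and> (\<forall>c x y. sS c (x * y) = sS c x * y)"

definition alg_automorphism ::
  "('k::field \<Rightarrow> 'a::ab_group_add \<Rightarrow> 'a) \<Rightarrow> ('a \<Rightarrow> 'a \<Rightarrow> 'a) \<Rightarrow> ('a \<Rightarrow> 'a) \<Rightarrow> bool" where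
  "alg_automorphism sA mA \<sigma> \<longleftrightarrow>
     Vector_Spaces.linear sA sA \<sigma> \<and> bij \<sigma> \<and> (\<forall>x y. \<sigma> (mA x y) = mA (\<sigma> x) (\<sigma> y))"

definition primitive_root_of_unity :: "nat \<Rightarrow> 'k::field \<Rightarrow> bool" where
  "primitive_root_of_unity m \<omega> \<longleftrightarrow> \<omega> ^ m = 1 \<and> (\<forall>j. 0 < j \<and> j < m \<longrightarrow> \<omega> ^ j \<noteq> 1)"

(* eigenspace  X_{bar i} = {x | sigma x = omega^i x}  (i an integer, read modulo m) *)
definition eigsp :: "('k::field \<Rightarrow> 'a \<Rightarrow> 'a) \<Rightarrow> ('a \<Rightarrow> 'a) \<Rightarrow> 'k \<Rightarrow> int \<Rightarrow> 'a set" where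
  "eigsp s \<sigma> \<omega> i = {x. \<sigma> x = s (\<omega> powi i) x}"

(* T together with tp : A x S -> T is a tensor product A \<otimes>_k S:
   tp is bilinear, the pure tensors span T, and for every finite linearly independent
   family (a_x) in A, sum a_x \<otimes> s_x = 0 forces all s_x = 0 *)
definition is_tensor_product ::
  "('k::field \<Rightarrow> 'a::ab_group_add \<Rightarrow> 'a) \<Rightarrow> ('k \<Rightarrow> 's::ab_group_add \<Rightarrow> 's)
   \<Rightarrow> ('k \<Rightarrow> 't::ab_group_add \<Rightarrow> 't) \<Rightarrow> ('a \<Rightarrow> 's \<Rightarrow> 't) \<Rightarrow> bool" where
  "is_tensor_product sA sS sT tp \<longleftrightarrow>
     vector_space sT \<and> bilinear_map sA sS sT tp \<and>
     module.span sT (range (\<lambda>(a, s). tp a s)) = UNIV \<and>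
     (\<forall>F f. finite F \<and> \<not> module.dependent sA F \<and> (\<Sum>a\<in>F. tp a (f a)) = 0
            \<longrightarrow> (\<forall>a\<in>F. f a = 0))"

definition fixed_subalg ::
  "('k::field \<Rightarrow> 't::ab_group_add \<Rightarrow> 't) \<Rightarrow> ('a \<Rightarrow> 's \<Rightarrow> 't) \<Rightarrow> 'k
   \<Rightarrow> ('k \<Rightarrow> 'a \<Rightarrow> 'a) \<Rightarrow> ('a \<Rightarrow> 'a) \<Rightarrow> ('k \<Rightarrow> 's \<Rightarrow> 's) \<Rightarrow> ('s \<Rightarrow> 's) \<Rightarrow> 't set" where
  "fixed_subalg sT tp \<omega> sA \<sigma>1 sS \<sigma>2 =
     module.span sT {tp a s | a s j. a \<in> eigsp sA \<sigma>1 \<omega> (- j) \<and> s \<in> eigsp sS \<sigma>2 \<omega> j}"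

definition is_derivation_on ::
  "('k::field \<Rightarrow> 't::ab_group_add \<Rightarrow> 't) \<Rightarrow> ('t \<Rightarrow> 't \<Rightarrow> 't) \<Rightarrow> 't set \<Rightarrow> ('t \<Rightarrow> 't) \<Rightarrow> bool" where
  "is_derivation_on sT mT B d \<longleftrightarrow>
     (\<forall>x\<in>B. d x \<in> B) \<and>
     (\<forall>x\<in>B. \<forall>y\<in>B. d (x + y) = d x + d y) \<and>
     (\<forall>c. \<forall>x\<in>B. d (sT c x) = sT c (d x)) \<and>
     (\<forall>x\<in>B. \<forall>y\<in>B. d (mT x y) = mT (d x) y + mT x (d y))"

definition zpow :: "'s::comm_ring_1 \<Rightarrow> int \<Rightarrow> 's" where
  "zpow u z = (if 0 \<le> z then u ^ nat z else (SOME v. u * v = 1) ^ nat (- z))"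

definition eps :: "nat \<Rightarrow> int \<Rightarrow> int" where
  "eps m i = i mod int m"

end

theory Submission
  imports Defs
begin

(* For a in A_i put Phi(n) = u^(-nm) d(a \<otimes> u^(-i+nm)).  If a = x y with x in A_j and
   y in A_(i-j), the Leibniz rule splits Phi(p + q) into F(p) + G(q), so Phi has constant
   increments.  Having constant increments is a linear condition on a, and A_i is spanned by
   such products: A is perfect, and since m is invertible in k the averaging projections
   (1/m) \<Sum>\<^sub>k \<omega>^(-ik) \<sigma>1^k split every product xy into products of eigenvectors.  Hence Phi is
   affine in n, which gives the first three identities.  For the last one, u^e (Phi(1) - Phi(0))
   does not change when e is replaced by e + m, because this only shifts Phi by one step. *)

lemma zpow_0 [simp]: "zpow u 0 = 1"
  by (simp add: zpow_def)

lemma pow_mult_pow_cancel: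
  fixes u v :: "'a::comm_monoid_mult"
  assumes uv: "u * v = 1" and "p + q' = p' + q"
  shows "u ^ p * v ^ q = u ^ p' * v ^ q'"
proof -
  have "u ^ p * v ^ q = u ^ (p + q') * v ^ (q + q')"
    by (simp add: power_add mult_ac power_mult_distrib[symmetric] uv)
  also have "\<dots> = u ^ p' * v ^ q' * (u * v) ^ q"
    by (simp add: assms(2) power_add power_mult_distrib mult_ac)
  finally show ?thesis by (simp add: uv)
qed

lemma zpow_eq_pow_mult_pow:
  fixes u :: "'s::comm_ring_1"
  assumes uv: "u * v = 1"
  shows "zpow u z = u ^ nat z * v ^ nat (- z)"
proof -
  have "(SOME w. u * w = 1) = v"
  proof (rule some_equality)
    show "u * w = 1 \<Longrightarrow> w = v" for w
      by (metis uv mult.assoc mult.commute mult_1_right)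
  qed (rule uv)
  then show ?thesis by (simp add: zpow_def)
qed

lemma zpow_add:
  fixes u :: "'s::comm_ring_1"
  assumes "\<exists>v. u * v = 1"
  shows "zpow u a * zpow u b = zpow u (a + b)"
proof -
  obtain v where uv: "u * v = 1" using assms by blast
  have "u ^ nat a * v ^ nat (- a) * (u ^ nat b * v ^ nat (- b))
      = u ^ (nat a + nat b) * v ^ (nat (- a) + nat (- b))"
    by (simp add: power_add mult_ac)
  also have "\<dots> = u ^ nat (a + b) * v ^ nat (- (a + b))"
    by (rule pow_mult_pow_cancel[OF uv]) linarith
  finally show ?thesis by (simp add: zpow_eq_pow_mult_pow[OF uv])
qed

lemma primitive_root_of_unity_nonzero:
  "primitive_root_of_unity m \<omega> \<Longrightarrow> 0 < m \<Longrightarrow> \<omega> \<noteq> 0"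
  unfolding primitive_root_of_unity_def by (cases m) auto

lemma primitive_root_powi_mod:
  assumes \<omega>: "primitive_root_of_unity m \<omega>" and m: "0 < m"
  shows "\<omega> powi i = \<omega> ^ nat (i mod int m)"
proof -
  have "\<omega> powi (int m * (i div int m)) = 1"
    using \<omega> by (simp add: power_int_mult primitive_root_of_unity_def)
  then have "\<omega> powi i = \<omega> powi (i mod int m)"
    using primitive_root_of_unity_nonzero[OF \<omega> m]
    by (metis div_mult_mod_eq mult.commute mult_1 power_int_add)
  also have "\<dots> = \<omega> ^ nat (i mod int m)"
    using m by (metis power_int_of_nat pos_mod_sign of_nat_0_less_iff int_nat_eq)
  finally show ?thesis .
qed

lemma eigsp_mod_cong:
  assumes "primitive_root_of_unity m \<omega>" and "0 < m" and "i mod int m = j mod int m"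
  shows "eigsp s \<sigma> \<omega> i = eigsp s \<sigma> \<omega> j"
  using primitive_root_powi_mod[OF assms(1,2)] assms(3) by (simp add: eigsp_def)

lemma sum_powers_primitive_root:
  assumes \<omega>: "primitive_root_of_unity m \<omega>" and m: "0 < m"
  shows "(\<Sum>k<m. (\<omega> powi t) ^ k) = (if int m dvd t then of_nat m else 0)"
proof (cases "int m dvd t")
  case True
  then show ?thesis by (simp add: primitive_root_powi_mod[OF \<omega> m])
next
  case False
  define r where "r = nat (t mod int m)"
  have "t mod int m \<noteq> 0" "0 \<le> t mod int m" "t mod int m < int m"
    using False m by (simp_all add: dvd_eq_mod_eq_0)
  then have "0 < r" "r < m" unfolding r_def by linarith+
  then have "\<omega> ^ r \<noteq> 1" using \<omega> by (simp add: primitive_root_of_unity_def)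
  moreover have "(\<omega> ^ r) ^ m = (\<omega> ^ m) ^ r"
    by (metis mult.commute power_mult)
  then have "(\<omega> ^ r) ^ m = 1"
    using \<omega> by (simp add: primitive_root_of_unity_def)
  ultimately show ?thesis
    using False geometric_sum[of "\<omega> ^ r" m] by (simp add: primitive_root_powi_mod[OF \<omega> m] r_def)
qed

(* The locale linear inherits these from module_hom without exporting them under its name. *)
lemmas linear_map_add = module_hom.add[OF module_hom_linearI]
  and linear_map_scale = module_hom.scale[OF module_hom_linearI]
  and linear_map_diff = module_hom.diff[OF module_hom_linearI]
  and linear_map_sum = module_hom.sum[OF module_hom_linearI]
  and linear_map_zero = module_hom.zero[OF module_hom_linearI]

lemma eigsp_mult:
  assumes alg: "k_algebra s mult" and \<sigma>: "\<And>x y. \<sigma> (mult x y) = mult (\<sigma> x) (\<sigma> y)"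
    and \<omega>: "\<omega> \<noteq> 0" and x: "x \<in> eigsp s \<sigma> \<omega> i" and y: "y \<in> eigsp s \<sigma> \<omega> j"
  shows "mult x y \<in> eigsp s \<sigma> \<omega> (i + j)"
proof -
  interpret vector_space s using alg by (simp add: k_algebra_def)
  have "mult (s c x) y = s c (mult x y)" "mult x (s c y) = s c (mult x y)" for c x y
    using alg linear_map_scale[of s s "\<lambda>x. mult x y"] linear_map_scale[of s s "mult x"]
    by (simp_all add: k_algebra_def bilinear_map_def)
  then show ?thesis
    using x y \<sigma> \<omega> by (simp add: eigsp_def power_int_add mult.commute)
qed

lemma k_algebra_times:
  assumes "comm_unital_k_algebra s"
  shows "k_algebra s (*)"
proof -
  interpret vector_space s using assms by (simp add: comm_unital_k_algebra_def)
  have left: "s c (x * y) = s c x * y" for c x y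
    using assms by (simp add: comm_unital_k_algebra_def)
  have "Vector_Spaces.linear s s (\<lambda>x. x * y)" "Vector_Spaces.linear s s ((*) x)" for x y
    by (auto simp: Vector_Spaces.linear_iff vector_space_axioms left distrib_left distrib_right
        mult.commute[of x])
  then show ?thesis by (simp add: k_algebra_def bilinear_map_def vector_space_axioms)
qed

context
  fixes s :: "'k::field \<Rightarrow> 's::comm_ring_1 \<Rightarrow> 's" and \<sigma> :: "'s \<Rightarrow> 's" and \<omega> :: 'k
  assumes alg: "comm_unital_k_algebra s"
    and \<sigma>_mult: "\<And>x y. \<sigma> (x * y) = \<sigma> x * \<sigma> y" and \<sigma>_one: "\<sigma> 1 = 1"
    and \<omega>: "\<omega> \<noteq> 0"
begin

interpretation vector_space s
  using alg by (simp add: comm_unital_k_algebra_def)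

lemma scale_times_scale: "s a x * s b y = s (a * b) (x * y)"
proof -
  have left: "s c (x * y) = s c x * y" for c x y
    using alg by (simp add: comm_unital_k_algebra_def)
  have "s a x * s b y = s a (s b (y * x))"
    by (metis left mult.commute)
  then show ?thesis by (simp add: mult.commute)
qed

lemma eigsp_power: "x \<in> eigsp s \<sigma> \<omega> i \<Longrightarrow> x ^ n \<in> eigsp s \<sigma> \<omega> (int n * i)"
proof (induction n)
  case 0
  show ?case by (simp add: eigsp_def \<sigma>_one)
next
  case (Suc n)
  have "x ^ n \<in> eigsp s \<sigma> \<omega> (int n * i)" using Suc by simp
  then have "x * x ^ n \<in> eigsp s \<sigma> \<omega> (i + int n * i)"
    by (rule eigsp_mult[OF k_algebra_times[OF alg] \<sigma>_mult \<omega> Suc.prems])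
  then show ?case by (simp add: distrib_right)
qed

lemma eigsp_inverse:
  assumes uv: "u * v = 1" and u: "u \<in> eigsp s \<sigma> \<omega> i"
  shows "v \<in> eigsp s \<sigma> \<omega> (- i)"
proof -
  define c where "c = \<omega> powi i"
  have \<sigma>u: "\<sigma> u = s c u" using u by (simp add: eigsp_def c_def)
  have "s (inverse c) v = \<sigma> (u * v) * s (inverse c) v"
    by (simp add: uv \<sigma>_one)
  also have "\<dots> = \<sigma> v * (s c u * s (inverse c) v)"
    by (simp only: \<sigma>_mult \<sigma>u mult_ac)
  also have "\<dots> = \<sigma> v"
    using \<omega> by (simp add: scale_times_scale uv c_def)
  finally show ?thesis by (simp add: eigsp_def power_int_minus c_def)
qed

lemma zpow_eigsp:
  assumes "u \<in> eigsp s \<sigma> \<omega> 1" and "\<exists>v. u * v = 1"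
  shows "zpow u z \<in> eigsp s \<sigma> \<omega> z"
proof -
  obtain v where uv: "u * v = 1" using assms(2) by blast
  have "u ^ nat z * v ^ nat (- z) \<in> eigsp s \<sigma> \<omega> (int (nat z) * 1 + int (nat (- z)) * - 1)"
    by (rule eigsp_mult[OF k_algebra_times[OF alg] \<sigma>_mult \<omega> eigsp_power eigsp_power])
      (use assms(1) eigsp_inverse[OF uv assms(1)] in simp_all)
  moreover have "int (nat z) * 1 + int (nat (- z)) * - 1 = z" by simp
  ultimately show ?thesis by (simp add: zpow_eq_pow_mult_pow[OF uv])
qed

end

locale eigen_decomposition = vector_space scale
  for scale :: "'k::field \<Rightarrow> 'a::ab_group_add \<Rightarrow> 'a" +
  fixes \<sigma> :: "'a \<Rightarrow> 'a" and m :: nat and \<omega> :: 'k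
  assumes linear_\<sigma>: "Vector_Spaces.linear scale scale \<sigma>"
    and \<sigma>_order: "\<sigma> ^^ m = id"
    and m_invertible: "of_nat m \<noteq> (0::'k)"
    and primitive_root: "primitive_root_of_unity m \<omega>"
begin

abbreviation E :: "int \<Rightarrow> 'a set" where
  "E i \<equiv> eigsp scale \<sigma> \<omega> i"

lemma m_pos: "0 < m"
  using m_invertible by (cases m) auto

lemma \<omega>_nonzero: "\<omega> \<noteq> 0"
  using primitive_root_of_unity_nonzero[OF primitive_root m_pos] .

lemma E_mod_cong: "i mod int m = j mod int m \<Longrightarrow> E i = E j"
  using eigsp_mod_cong[OF primitive_root m_pos] .

lemma subspace_E: "subspace (E i)"
  unfolding subspace_def eigsp_def
  by (auto simp: linear_map_add[OF linear_\<sigma>] linear_map_scale[OF linear_\<sigma>]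
      linear_map_zero[OF linear_\<sigma>] scale_right_distrib mult.commute)

lemma linear_\<sigma>_iter: "Vector_Spaces.linear scale scale (\<sigma> ^^ k)"
proof (induction k)
  case 0
  then show ?case by (simp add: linear_ident)
next
  case (Suc k)
  then show ?case
    using Vector_Spaces.linear_compose[OF Suc.IH linear_\<sigma>] by (simp only: funpow.simps(2))
qed

lemma \<sigma>_iter_E: "x \<in> E j \<Longrightarrow> (\<sigma> ^^ k) x = scale ((\<omega> powi j) ^ k) x"
  by (induction k) (simp_all add: linear_map_scale[OF linear_\<sigma>] eigsp_def mult.commute)

definition eigen_proj :: "int \<Rightarrow> 'a \<Rightarrow> 'a" where
  "eigen_proj i x =
     scale (inverse (of_nat m)) (\<Sum>k<m. scale ((\<omega> powi (- i)) ^ k) ((\<sigma> ^^ k) x))"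

lemma linear_eigen_proj: "Vector_Spaces.linear scale scale (eigen_proj i)"
  unfolding Vector_Spaces.linear_iff eigen_proj_def
  by (simp add: vector_space_axioms linear_map_add[OF linear_\<sigma>_iter]
      linear_map_scale[OF linear_\<sigma>_iter] scale_right_distrib sum.distrib scale_sum_right
      mult_ac)

lemma eigen_proj_E:
  assumes x: "x \<in> E j"
  shows "eigen_proj i x = (if int m dvd (j - i) then x else 0)"
proof -
  have "(\<Sum>k<m. scale ((\<omega> powi (- i)) ^ k) ((\<sigma> ^^ k) x))
      = scale (\<Sum>k<m. (\<omega> powi (j - i)) ^ k) x"
    using \<omega>_nonzero
    by (simp add: \<sigma>_iter_E[OF x] scale_sum_left power_int_diff power_int_minus
        power_mult_distrib[symmetric] field_simps)
  then show ?thesis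
    using m_invertible by (simp add: eigen_proj_def sum_powers_primitive_root[OF primitive_root m_pos])
qed

lemma sum_eigen_proj: "(\<Sum>r<m. eigen_proj (int r) x) = x"
proof -
  have "(\<Sum>r<m. \<Sum>k<m. scale ((\<omega> powi (- int r)) ^ k) ((\<sigma> ^^ k) x))
      = (\<Sum>k<m. scale (\<Sum>r<m. (\<omega> powi (- int k)) ^ r) ((\<sigma> ^^ k) x))"
    by (subst sum.swap)
      (simp add: scale_sum_left power_int_mult[symmetric] flip: power_int_of_nat mult.commute)
  also have "\<dots> = (\<Sum>k<m. if k = 0 then scale (of_nat m) x else 0)"
    by (rule sum.cong) (auto simp: sum_powers_primitive_root[OF primitive_root m_pos])
  also have "\<dots> = scale (of_nat m) x"
    using m_pos by simp
  finally show ?thesis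
    using m_invertible by (simp add: eigen_proj_def scale_sum_right[symmetric])
qed

lemma eigen_proj_in_E: "eigen_proj i x \<in> E i"
proof -
  define c where "c = \<omega> powi (- i)"
  define g where "g k = scale (c ^ k) ((\<sigma> ^^ k) x)" for k
  have "c ^ m = (\<omega> powi int m) powi (- i)"
    by (metis c_def mult.commute power_int_mult power_int_of_nat)
  then have "c ^ m = 1"
    using primitive_root by (simp add: primitive_root_of_unity_def)
  then have periodic: "g m = g 0"
    by (simp add: g_def \<sigma>_order)
  have "g 0 + (\<Sum>k<m. g (Suc k)) = (\<Sum>k<m. g k) + g m"
    by (simp only: sum.lessThan_Suc_shift[symmetric] sum.lessThan_Suc)
  then have shift: "(\<Sum>k<m. g (Suc k)) = (\<Sum>k<m. g k)"
    by (simp add: periodic add.commute)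
  have "\<sigma> (g k) = scale (\<omega> powi i) (g (Suc k))" for k
    using \<omega>_nonzero
    by (simp add: g_def c_def linear_map_scale[OF linear_\<sigma>] power_int_minus field_simps)
  then have "\<sigma> (\<Sum>k<m. g k) = scale (\<omega> powi i) (\<Sum>k<m. g (Suc k))"
    by (simp add: linear_map_sum[OF linear_\<sigma>] scale_sum_right)
  then have "\<sigma> (\<Sum>k<m. g k) = scale (\<omega> powi i) (\<Sum>k<m. g k)"
    unfolding shift .
  then show ?thesis
    by (simp add: eigsp_def eigen_proj_def linear_map_scale[OF linear_\<sigma>] scale_left_commute
        flip: g_def c_def)
qed

end

locale algebra_eigen_decomposition = eigen_decomposition scale \<sigma> m \<omega>
  for scale :: "'k::field \<Rightarrow> 'a::ab_group_add \<Rightarrow> 'a" and \<sigma> m \<omega> +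
  fixes mult :: "'a \<Rightarrow> 'a \<Rightarrow> 'a"
  assumes algebra: "k_algebra scale mult"
    and \<sigma>_mult: "\<And>x y. \<sigma> (mult x y) = mult (\<sigma> x) (\<sigma> y)"
begin

definition eigen_products :: "int \<Rightarrow> 'a set" where
  "eigen_products i = {mult x y | x y j. x \<in> E j \<and> y \<in> E (i - j)}"

lemma E_mult: "x \<in> E i \<Longrightarrow> y \<in> E j \<Longrightarrow> mult x y \<in> E (i + j)"
  by (rule eigsp_mult[of scale mult \<sigma>, OF algebra \<sigma>_mult \<omega>_nonzero])

lemma eigen_proj_mult_in_span: "eigen_proj i (mult x y) \<in> span (eigen_products i)"
proof -
  have linear_mult: "Vector_Spaces.linear scale scale (\<lambda>x. mult x y)"
    "Vector_Spaces.linear scale scale (mult x)" for x y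
    using algebra by (simp_all add: k_algebra_def bilinear_map_def)
  have "mult x y = mult (\<Sum>r<m. eigen_proj (int r) x) (\<Sum>s<m. eigen_proj (int s) y)"
    by (simp add: sum_eigen_proj)
  also have "\<dots> = (\<Sum>s<m. \<Sum>r<m. mult (eigen_proj (int r) x) (eigen_proj (int s) y))"
    by (simp add: linear_map_sum[OF linear_mult(1)] linear_map_sum[OF linear_mult(2)])
  finally have "eigen_proj i (mult x y)
      = (\<Sum>s<m. \<Sum>r<m. eigen_proj i (mult (eigen_proj (int r) x) (eigen_proj (int s) y)))"
    by (simp add: linear_map_sum[OF linear_eigen_proj])
  also have "\<dots> \<in> span (eigen_products i)"
  proof (intro span_sum)
    fix r s :: nat
    let ?xy = "mult (eigen_proj (int r) x) (eigen_proj (int s) y)"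
    have xy: "?xy \<in> E (int r + int s)"
      by (rule E_mult[OF eigen_proj_in_E eigen_proj_in_E])
    show "eigen_proj i ?xy \<in> span (eigen_products i)"
    proof (cases "int m dvd (int r + int s - i)")
      case True
      then have "E (int s) = E (i - int r)"
        by (intro E_mod_cong) (simp add: mod_eq_dvd_iff dvd_diff_commute algebra_simps)
      then have "?xy \<in> eigen_products i"
        unfolding eigen_products_def using eigen_proj_in_E by blast
      then show ?thesis using True by (simp add: eigen_proj_E[OF xy] span_base)
    next
      case False
      then show ?thesis by (simp add: eigen_proj_E[OF xy] span_zero)
    qed
  qed
  finally show ?thesis .
qed

lemma perfect_E_subset_span:
  assumes "perfect_algebra scale mult"
  shows "E i \<subseteq> span (eigen_products i)"
proof
  fix a assume a: "a \<in> E i"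
  have "a \<in> span {mult x y | x y. True}"
    using assms by (simp add: perfect_algebra_def)
  then have "eigen_proj i a \<in> span (eigen_products i)"
  proof (induction rule: span_induct)
    show "subspace {z. eigen_proj i z \<in> span (eigen_products i)}"
    by (rule subspaceI) (simp_all add: linear_map_zero[OF linear_eigen_proj]
        linear_map_add[OF linear_eigen_proj] linear_map_scale[OF linear_eigen_proj]
        span_zero span_add span_scale)
  qed (auto simp: eigen_proj_mult_in_span)
  then show "a \<in> span (eigen_products i)"
    by (simp add: eigen_proj_E[OF a])
qed

end

locale tensor_action =
  fixes sA :: "'k::field \<Rightarrow> 'a::ab_group_add \<Rightarrow> 'a" and mA :: "'a \<Rightarrow> 'a \<Rightarrow> 'a"
    and sS :: "'k \<Rightarrow> 's::comm_ring_1 \<Rightarrow> 's"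
    and sT :: "'k \<Rightarrow> 't::ab_group_add \<Rightarrow> 't" and tp :: "'a \<Rightarrow> 's \<Rightarrow> 't"
    and mT :: "'t \<Rightarrow> 't \<Rightarrow> 't" and act :: "'s \<Rightarrow> 't \<Rightarrow> 't"
  assumes tensor: "is_tensor_product sA sS sT tp"
    and mT_bilinear: "bilinear_map sT sT sT mT"
    and mT_tp: "\<And>a b s t. mT (tp a s) (tp b t) = tp (mA a b) (s * t)"
    and linear_act: "\<And>s. Vector_Spaces.linear sT sT (act s)"
    and act_tp: "\<And>s' a s. act s' (tp a s) = tp a (s * s')"
begin

sublocale T: vector_space sT
  using tensor by (simp add: is_tensor_product_def)

lemma linear_tp_left: "Vector_Spaces.linear sA sT (\<lambda>a. tp a s)"
  using tensor by (simp add: is_tensor_product_def bilinear_map_def)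

lemma linear_mT: "Vector_Spaces.linear sT sT (\<lambda>X. mT X Y)" "Vector_Spaces.linear sT sT (mT X)"
  using mT_bilinear by (simp_all add: bilinear_map_def)

lemma linear_eq_on_pure_tensors:
  assumes "Vector_Spaces.linear sT sT f" "Vector_Spaces.linear sT sT g"
    and "\<And>a s. f (tp a s) = g (tp a s)"
  shows "f X = g X"
proof -
  interpret vector_space_pair sT sT ..
  have "X \<in> T.span (range (\<lambda>(a, s). tp a s))"
    using tensor by (simp add: is_tensor_product_def)
  then show ?thesis
    by (rule linear_eq_on[OF assms(1,2)]) (auto simp: assms(3))
qed

lemma bilinear_eq_on_pure_tensors:
  assumes "\<And>Y. Vector_Spaces.linear sT sT (\<lambda>X. f X Y)" "\<And>Y. Vector_Spaces.linear sT sT (\<lambda>X. g X Y)"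
    and "\<And>X. Vector_Spaces.linear sT sT (f X)" "\<And>X. Vector_Spaces.linear sT sT (g X)"
    and "\<And>a s b t. f (tp a s) (tp b t) = g (tp a s) (tp b t)"
  shows "f X Y = g X Y"
proof (rule linear_eq_on_pure_tensors[of "\<lambda>X. f X Y" "\<lambda>X. g X Y"])
  show "f (tp a s) Y = g (tp a s) Y" for a s
    by (rule linear_eq_on_pure_tensors) (use assms in auto)
qed (use assms in auto)

lemma act_act: "act s (act t X) = act (s * t) X"
  by (rule linear_eq_on_pure_tensors[of "\<lambda>X. act s (act t X)"])
    (simp_all add: Vector_Spaces.linear_compose[OF linear_act linear_act, unfolded o_def]
      linear_act act_tp mult_ac)

lemma act_one: "act 1 X = X"
  by (rule linear_eq_on_pure_tensors) (simp_all add: linear_act T.linear_ident act_tp)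

lemma mT_act_left: "mT (act s X) Y = act s (mT X Y)"
  by (rule bilinear_eq_on_pure_tensors[of "\<lambda>X Y. mT (act s X) Y"])
    (simp_all add: Vector_Spaces.linear_compose[OF linear_act linear_mT(1), unfolded o_def]
      Vector_Spaces.linear_compose[OF linear_mT(1) linear_act, unfolded o_def]
      Vector_Spaces.linear_compose[OF linear_mT(2) linear_act, unfolded o_def]
      linear_mT mT_tp act_tp mult_ac)

lemma mT_act_right: "mT X (act s Y) = act s (mT X Y)"
  by (rule bilinear_eq_on_pure_tensors[of "\<lambda>X Y. mT X (act s Y)"])
    (simp_all add: Vector_Spaces.linear_compose[OF linear_act linear_mT(2), unfolded o_def]
      Vector_Spaces.linear_compose[OF linear_mT(1) linear_act, unfolded o_def]
      Vector_Spaces.linear_compose[OF linear_mT(2) linear_act, unfolded o_def]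
      linear_mT mT_tp act_tp mult_ac)

end

definition constant_increments :: "(int \<Rightarrow> 'b::ab_group_add) \<Rightarrow> bool" where
  "constant_increments f \<longleftrightarrow> (\<forall>n. f (n + 1) - f n = f 1 - f 0)"

lemma constant_increments_if_split:
  assumes "\<And>p q. f (p + q) = g p + h q"
  shows "constant_increments f"
  unfolding constant_increments_def
  using assms[of _ 1] assms[of _ 0] assms[of 0 1] assms[of 0 0] by simp

lemma (in vector_space) affine_if_constant_increments:
  assumes "constant_increments f"
  shows "f n = f 0 + scale (of_int n) (f 1 - f 0)"
proof (induction n rule: int_induct[where k = 0])
  case (step1 n)
  have "f (n + 1) - f n = f 1 - f 0"
    using assms by (simp add: constant_increments_def)
  then have "f (n + 1) = f n + (f 1 - f 0)"
    by (simp add: diff_eq_eq add.commute)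
  then show ?case
    using step1(2) by (simp add: scale_left_distrib)
next
  case (step2 n)
  have increment: "f n - f (n - 1) = f 1 - f 0"
    using assms[unfolded constant_increments_def, rule_format, of "n - 1"] by simp
  have "f (n - 1) = f n - (f n - f (n - 1))"
    by simp
  also have "\<dots> = f n - (f 1 - f 0)"
    by (simp only: increment)
  finally show ?case
    using step2(2) by (simp add: scale_left_diff_distrib)
qed simp

lemma (in vector_space) constant_increments_identities:
  assumes "constant_increments f"
  shows "f n + f (- n) = scale 2 (f 0)"
    and "f n + scale (of_int n) (f (- 1)) = scale (1 + of_int n) (f 0)"
    and "f n - scale (of_int n) (f 1) = scale (1 - of_int n) (f 0)"
proof -
  obtain p c where affine: "\<And>k. f k = p + scale (of_int k) c"
    using affine_if_constant_increments[OF assms] by blast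
  have two: "scale 2 x = x + x" for x
    using scale_left_distrib[of 1 1 x] by simp
  show "f n + f (- n) = scale 2 (f 0)"
    by (simp add: affine two scale_left_distrib)
  show "f n + scale (of_int n) (f (- 1)) = scale (1 + of_int n) (f 0)"
    by (simp add: affine scale_left_distrib scale_right_distrib scale_right_diff_distrib)
  show "f n - scale (of_int n) (f 1) = scale (1 - of_int n) (f 0)"
    by (simp add: affine scale_left_diff_distrib scale_right_distrib)
qed

lemma eps_add_cases:
  assumes "0 < m"
  shows "eps m i + eps m j = eps m (i + j) \<or> eps m i + eps m j = eps m (i + j) + int m"
proof -
  define r where "r = eps m i + eps m j"
  have r_mod: "r mod int m = eps m (i + j)"
    by (simp add: r_def eps_def mod_add_eq)
  have "0 \<le> eps m i" "eps m i < int m" "0 \<le> eps m j" "eps m j < int m"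
    using assms by (simp_all add: eps_def)
  then have "0 \<le> r" "r < 2 * int m"
    unfolding r_def by linarith+
  show ?thesis
  proof (cases "r < int m")
    case True
    then have "r = eps m (i + j)"
      using \<open>0 \<le> r\<close> r_mod by simp
    then show ?thesis by (simp add: r_def)
  next
    case False
    then have "(r - int m) mod int m = r - int m"
      using \<open>r < 2 * int m\<close> by (intro mod_pos_pos_trivial) linarith+
    then have "r - int m = eps m (i + j)"
      by (simp add: r_mod)
    then show ?thesis by (simp add: r_def algebra_simps)
  qed
qed

locale fixed_point_derivation =
  A: algebra_eigen_decomposition sA \<sigma>1 m \<omega> mA + tensor_action sA mA sS sT tp mT act
  for sA :: "'k::field \<Rightarrow> 'a::ab_group_add \<Rightarrow> 'a" and \<sigma>1 m \<omega> mA
    and sS :: "'k \<Rightarrow> 's::comm_ring_1 \<Rightarrow> 's" and sT :: "'k \<Rightarrow> 't::ab_group_add \<Rightarrow> 't"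
    and tp mT act +
  fixes \<sigma>2 :: "'s \<Rightarrow> 's" and u :: 's and d :: "'t \<Rightarrow> 't"
  assumes perfect: "perfect_algebra sA mA"
    and S_algebra: "comm_unital_k_algebra sS"
    and \<sigma>2_mult: "\<And>x y. \<sigma>2 (x * y) = \<sigma>2 x * \<sigma>2 y" and \<sigma>2_one: "\<sigma>2 1 = 1"
    and u_eigsp: "u \<in> eigsp sS \<sigma>2 \<omega> 1" and u_unit: "\<exists>v. u * v = 1"
    and derivation: "is_derivation_on sT mT (fixed_subalg sT tp \<omega> sA \<sigma>1 sS \<sigma>2) d"
begin

abbreviation B :: "'t set" where
  "B \<equiv> fixed_subalg sT tp \<omega> sA \<sigma>1 sS \<sigma>2"

lemma tp_zpow_in_B:
  assumes a: "a \<in> A.E j" and "int m dvd (j + z)"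
  shows "tp a (zpow u z) \<in> B"
proof -
  have "a \<in> A.E (- z)"
    using a assms(2) A.E_mod_cong[of j "- z"] by (simp add: mod_eq_dvd_iff)
  moreover have "zpow u z \<in> eigsp sS \<sigma>2 \<omega> z"
    by (rule zpow_eigsp[OF S_algebra \<sigma>2_mult \<sigma>2_one A.\<omega>_nonzero u_eigsp u_unit])
  ultimately show ?thesis
    unfolding fixed_subalg_def by (intro T.span_base) blast
qed

lemma d_add: "X \<in> B \<Longrightarrow> Y \<in> B \<Longrightarrow> d (X + Y) = d X + d Y"
  and d_scale: "X \<in> B \<Longrightarrow> d (sT c X) = sT c (d X)"
  and d_Leibniz: "X \<in> B \<Longrightarrow> Y \<in> B \<Longrightarrow> d (mT X Y) = mT (d X) Y + mT X (d Y)"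
  using derivation by (simp_all add: is_derivation_on_def)

lemma act_zpow_act_zpow: "act (zpow u a) (act (zpow u b) X) = act (zpow u (a + b)) X"
  by (simp add: act_act zpow_add[OF u_unit])

definition d_shift :: "int \<Rightarrow> 'a \<Rightarrow> int \<Rightarrow> 't" where
  "d_shift i a n = act (zpow u (- n * int m)) (d (tp a (zpow u (- i + n * int m))))"

lemma d_shift_period: "d_shift (i + int m) a n = act (zpow u (- int m)) (d_shift i a (n - 1))"
  by (simp add: d_shift_def act_zpow_act_zpow algebra_simps)

lemma tp_d_shift_in_B:
  assumes "a \<in> A.E i"
  shows "tp a (zpow u (- i + n * int m)) \<in> B"
proof (rule tp_zpow_in_B[OF assms])
  have "i + (- i + n * int m) = n * int m" by simp
  then show "int m dvd i + (- i + n * int m)" by simp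
qed

lemma d_shift_add:
  assumes "a \<in> A.E i" "b \<in> A.E i"
  shows "d_shift i (a + b) n = d_shift i a n + d_shift i b n"
  unfolding d_shift_def linear_map_add[OF linear_tp_left]
    d_add[OF tp_d_shift_in_B[OF assms(1)] tp_d_shift_in_B[OF assms(2)]]
  by (rule linear_map_add[OF linear_act])

lemma d_shift_scale:
  assumes "a \<in> A.E i"
  shows "d_shift i (sA c a) n = sT c (d_shift i a n)"
  unfolding d_shift_def linear_map_scale[OF linear_tp_left] d_scale[OF tp_d_shift_in_B[OF assms]]
  by (rule linear_map_scale[OF linear_act])

lemma d_shift_mult:
  assumes x: "x \<in> A.E j" and y: "y \<in> A.E (i - j)"
  shows "d_shift i (mA x y) (p + q)
       = mT (d_shift j x p) (tp y (zpow u (j - i))) + mT (tp x (zpow u (- j))) (d_shift (i - j) y q)"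
proof -
  define X where "X = tp x (zpow u (- j + p * int m))"
  define Y where "Y = tp y (zpow u (- (i - j) + q * int m))"
  have X: "X = act (zpow u (p * int m)) (tp x (zpow u (- j)))"
    and Y: "Y = act (zpow u (q * int m)) (tp y (zpow u (j - i)))"
    by (simp_all add: X_def Y_def act_tp zpow_add[OF u_unit])
  have "tp (mA x y) (zpow u (- i + (p + q) * int m)) = mT X Y"
    by (simp add: X_def Y_def mT_tp zpow_add[OF u_unit] algebra_simps)
  then have "d_shift i (mA x y) (p + q)
      = act (zpow u (- (p + q) * int m)) (mT (d X) Y) + act (zpow u (- (p + q) * int m)) (mT X (d Y))"
    using tp_d_shift_in_B[OF x] tp_d_shift_in_B[OF y]
    by (simp add: d_shift_def d_Leibniz X_def Y_def linear_map_add[OF linear_act])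
  also have "act (zpow u (- (p + q) * int m)) (mT (d X) Y)
      = mT (d_shift j x p) (tp y (zpow u (j - i)))"
  proof -
    have "act (zpow u (- (p + q) * int m)) (mT (d X) Y)
        = act (zpow u (- p * int m)) (mT (d X) (tp y (zpow u (j - i))))"
      by (simp add: Y mT_act_right act_zpow_act_zpow algebra_simps)
    then show ?thesis by (simp add: d_shift_def X_def mT_act_left)
  qed
  also have "act (zpow u (- (p + q) * int m)) (mT X (d Y))
      = mT (tp x (zpow u (- j))) (d_shift (i - j) y q)"
  proof -
    have "act (zpow u (- (p + q) * int m)) (mT X (d Y))
        = act (zpow u (- q * int m)) (mT (tp x (zpow u (- j))) (d Y))"
      by (simp add: X mT_act_left act_zpow_act_zpow algebra_simps)
    then show ?thesis by (simp add: d_shift_def Y_def mT_act_right)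
  qed
  finally show ?thesis .
qed

lemma subspace_constant_increments:
  "A.subspace {a \<in> A.E i. constant_increments (d_shift i a)}"
proof (rule A.subspaceI)
  have "d_shift i 0 n = 0" for n
    using d_shift_scale[where c = 0, OF A.subspace_0[OF A.subspace_E[of i]]] by simp
  then show "0 \<in> {a \<in> A.E i. constant_increments (d_shift i a)}"
    by (simp add: A.subspace_0[OF A.subspace_E] constant_increments_def)
next
  fix a b assume "a \<in> {a \<in> A.E i. constant_increments (d_shift i a)}"
    and "b \<in> {a \<in> A.E i. constant_increments (d_shift i a)}"
  then show "a + b \<in> {a \<in> A.E i. constant_increments (d_shift i a)}"
    by (simp add: A.subspace_add[OF A.subspace_E] d_shift_add constant_increments_def
        algebra_simps)
next
  fix c a assume "a \<in> {a \<in> A.E i. constant_increments (d_shift i a)}"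
  then show "sA c a \<in> {a \<in> A.E i. constant_increments (d_shift i a)}"
    by (simp add: A.subspace_scale[OF A.subspace_E] d_shift_scale constant_increments_def
        flip: T.scale_right_diff_distrib)
qed

lemma d_shift_constant_increments:
  assumes "a \<in> A.E i"
  shows "constant_increments (d_shift i a)"
proof -
  have "A.eigen_products i \<subseteq> {a \<in> A.E i. constant_increments (d_shift i a)}"
  proof
    fix z assume "z \<in> A.eigen_products i"
    then obtain x y j where z: "z = mA x y" and x: "x \<in> A.E j" and y: "y \<in> A.E (i - j)"
      by (auto simp: A.eigen_products_def)
    have "z \<in> A.E i"
      using A.E_mult[OF x y] by (simp add: z)
    moreover have "constant_increments (d_shift i z)"
      unfolding z by (rule constant_increments_if_split) (rule d_shift_mult[OF x y])
    ultimately show "z \<in> {a \<in> A.E i. constant_increments (d_shift i a)}" by simp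
  qed
  then have "A.E i \<subseteq> {a \<in> A.E i. constant_increments (d_shift i a)}"
    using A.perfect_E_subset_span[OF perfect] A.span_minimal[OF _ subspace_constant_increments]
    by blast
  then show ?thesis
    using assms by blast
qed

lemma d_shift_identities:
  assumes "a \<in> A.E i"
  shows "d_shift i a n + d_shift i a (- n) = sT 2 (d_shift i a 0)"
    and "d_shift i a n + sT (of_int n) (d_shift i a (- 1)) = sT (1 + of_int n) (d_shift i a 0)"
    and "d_shift i a n - sT (of_int n) (d_shift i a 1) = sT (1 - of_int n) (d_shift i a 0)"
  using T.constant_increments_identities[OF d_shift_constant_increments[OF assms]] by blast+

lemma shifted_derivation_identities:
  fixes n :: int
  assumes "a \<in> A.E i"
  shows "act (zpow u (- n * m)) (d (tp a (zpow u (- i + n * m))))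
           + act (zpow u (n * m)) (d (tp a (zpow u (- i - n * m))))
         = sT 2 (d (tp a (zpow u (- i))))"
    and "act (zpow u (- n * m)) (d (tp a (zpow u (- i + n * m))))
           + sT (of_int n) (act (zpow u m) (d (tp a (zpow u (- i - m)))))
         = sT (1 + of_int n) (d (tp a (zpow u (- i))))"
    and "act (zpow u (- n * m)) (d (tp a (zpow u (- i + n * m))))
           - sT (of_int n) (act (zpow u (- m)) (d (tp a (zpow u (- i + m)))))
         = sT (1 - of_int n) (d (tp a (zpow u (- i))))"
  using d_shift_identities[OF assms, of n] by (simp_all add: d_shift_def act_one)

lemma d_difference_period:
  assumes b: "b \<in> A.E e" and f: "f = e \<or> f = e + int m"
  shows "act (zpow u f)
           (act (zpow u (- int m)) (d (tp b (zpow u (- f + int m)))) - d (tp b (zpow u (- f))))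
       = act (zpow u e)
           (act (zpow u (- int m)) (d (tp b (zpow u (- e + int m)))) - d (tp b (zpow u (- e))))"
proof -
  have as_d_shift: "act (zpow u x)
        (act (zpow u (- int m)) (d (tp b (zpow u (- x + int m)))) - d (tp b (zpow u (- x))))
      = act (zpow u x) (d_shift x b 1 - d_shift x b 0)" for x
    by (simp add: d_shift_def act_one)
  have "act (zpow u (e + int m)) (d_shift (e + int m) b 1 - d_shift (e + int m) b 0)
      = act (zpow u (e + int m)) (act (zpow u (- int m)) (d_shift e b 0 - d_shift e b (- 1)))"
    by (simp add: d_shift_period linear_map_diff[OF linear_act])
  also have "\<dots> = act (zpow u e) (d_shift e b (- 1 + 1) - d_shift e b (- 1))"
    by (simp add: act_zpow_act_zpow)
  also have "d_shift e b (- 1 + 1) - d_shift e b (- 1) = d_shift e b 1 - d_shift e b 0"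
    using d_shift_constant_increments[OF b] unfolding constant_increments_def by blast
  finally show ?thesis
    using f by (auto simp only: as_d_shift)
qed

lemma product_difference_eps:
  assumes ai: "ai \<in> A.E i" and aj: "aj \<in> A.E j"
  shows "act (zpow u (eps m (i + j)))
           (act (zpow u (- m)) (d (tp (mA ai aj) (zpow u (- eps m (i + j) + m))))
            - d (tp (mA ai aj) (zpow u (- eps m (i + j)))))
       = act (zpow u (eps m i + eps m j))
           (act (zpow u (- m)) (d (tp (mA ai aj) (zpow u (- eps m i - eps m j + m))))
            - d (tp (mA ai aj) (zpow u (- eps m i - eps m j))))"
proof -
  have "mA ai aj \<in> A.E (i + j)"
    by (rule A.E_mult[OF ai aj])
  then have b: "mA ai aj \<in> A.E (eps m (i + j))"
    using A.E_mod_cong[of "i + j" "eps m (i + j)"] by (simp add: eps_def)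
  have minus: "- eps m i - eps m j = - (eps m i + eps m j)"
    by simp
  show ?thesis
    unfolding minus by (rule d_difference_period[OF b eps_add_cases[OF A.m_pos], symmetric])
qed

end

theorem lemma4p6:
  fixes sA :: "'k::field \<Rightarrow> 'a::ab_group_add \<Rightarrow> 'a" and mA :: "'a \<Rightarrow> 'a \<Rightarrow> 'a"
    and sS :: "'k \<Rightarrow> 's::comm_ring_1 \<Rightarrow> 's"
    and sT :: "'k \<Rightarrow> 't::ab_group_add \<Rightarrow> 't" and tp :: "'a \<Rightarrow> 's \<Rightarrow> 't"
    and mT :: "'t \<Rightarrow> 't \<Rightarrow> 't" and act :: "'s \<Rightarrow> 't \<Rightarrow> 't"
    and m :: nat and \<omega> :: 'k
    and \<sigma>1 :: "'a \<Rightarrow> 'a" and \<sigma>2 :: "'s \<Rightarrow> 's"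
    and u :: 's and d :: "'t \<Rightarrow> 't"
  assumes m_pos: "0 < m" and char: "of_nat m \<noteq> (0::'k)"
    and omega: "primitive_root_of_unity m \<omega>"
    and A_alg: "k_algebra sA mA" and A_perfect: "perfect_algebra sA mA"
    and S_alg: "comm_unital_k_algebra sS"
    and tensor: "is_tensor_product sA sS sT tp"
    and mT_bil: "bilinear_map sT sT sT mT"
    and mT_tp: "\<And>a b s t. mT (tp a s) (tp b t) = tp (mA a b) (s * t)"
    and act_lin: "\<And>s. Vector_Spaces.linear sT sT (act s)"
    and act_tp: "\<And>s' a s. act s' (tp a s) = tp a (s * s')"
    and sigma1: "alg_automorphism sA mA \<sigma>1" and sigma1_m: "\<sigma>1 ^^ m = id"
    and sigma2: "alg_automorphism sS (*) \<sigma>2" and sigma2_one: "\<sigma>2 1 = 1"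
    and sigma2_m: "\<sigma>2 ^^ m = id"
    and u_deg: "u \<in> eigsp sS \<sigma>2 \<omega> 1" and u_unit: "\<exists>v. u * v = 1"
    and d_der: "is_derivation_on sT mT (fixed_subalg sT tp \<omega> sA \<sigma>1 sS \<sigma>2) d"
  shows "(\<forall>i n :: int. \<forall>a \<in> eigsp sA \<sigma>1 \<omega> i.
            act (zpow u (- n * m)) (d (tp a (zpow u (- i + n * m))))
              + act (zpow u (n * m)) (d (tp a (zpow u (- i - n * m))))
            = sT 2 (d (tp a (zpow u (- i))))
          \<and> act (zpow u (- n * m)) (d (tp a (zpow u (- i + n * m))))
              + sT (of_int n) (act (zpow u m) (d (tp a (zpow u (- i - m)))))
            = sT (1 + of_int n) (d (tp a (zpow u (- i))))
          \<and> act (zpow u (- n * m)) (d (tp a (zpow u (- i + n * m))))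
              - sT (of_int n) (act (zpow u (- m)) (d (tp a (zpow u (- i + m)))))
            = sT (1 - of_int n) (d (tp a (zpow u (- i)))))
       \<and> (\<forall>i j :: int. \<forall>ai \<in> eigsp sA \<sigma>1 \<omega> i. \<forall>aj \<in> eigsp sA \<sigma>1 \<omega> j.
            act (zpow u (eps m (i + j)))
              (act (zpow u (- m)) (d (tp (mA ai aj) (zpow u (- eps m (i + j) + m))))
               - d (tp (mA ai aj) (zpow u (- eps m (i + j)))))
            = act (zpow u (eps m i + eps m j))
              (act (zpow u (- m)) (d (tp (mA ai aj) (zpow u (- eps m i - eps m j + m))))
               - d (tp (mA ai aj) (zpow u (- eps m i - eps m j)))))"
proof -
  (* 0 < m follows from char. *)
  interpret fixed_point_derivation sA \<sigma>1 m \<omega> mA sS sT tp mT act \<sigma>2 u d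
    by (intro fixed_point_derivation.intro algebra_eigen_decomposition.intro
        eigen_decomposition.intro tensor_action.intro fixed_point_derivation_axioms.intro
        algebra_eigen_decomposition_axioms.intro eigen_decomposition_axioms.intro)
      (use assms in \<open>simp_all add: k_algebra_def alg_automorphism_def\<close>)
  show ?thesis
    using shifted_derivation_identities product_difference_eps by blast
qed

end
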